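(* Let $\Lambda>0$, $e>0$, $\phi_h>0$, and let $f:[0,\phi_h]\to(0,1]$ be strictly concave, strictly decreasing and differentiable with $f(0)=1$. Assume $2e/\Lambda\in f([0,\phi_h])$ and set $\underline{\phi}:=f^{-1}(2e/\Lambda)$, and let $\phi_{fp}:=\arg\max_{\phi\in[0,\phi_h]} f(\phi)\phi$. Define the limit matching revenue $$\tilde{\mathcal M}(\phi)=\begin{cases} e\phi & \text{if } \frac{e}{(\Lambda/2) f(\phi)}<1,\\ \frac{\Lambda}{2}f(\phi)\phi & \text{otherwise,}\end{cases}\qquad \phi\in[0,\phi_h].$$ Then $\tilde{\mathcal M}$ has a unique maximizer on $[0,\phi_h]$, given by $\phi^*=\max\{\phi_{fp},\underline{\phi}\}$. Moreover, for $\beta>0$ let $$\mathcal M(\phi;\beta)=\frac{\Lambda}{2}f(\phi)\phi\,\bigl(1-\mathcal D(\phi;\beta)\bigr),\qquad \mathcal D(\phi;\beta)=\Bigl(\sum_{n=0}^\infty \frac{e^n}{\prod_{a=1}^n\bigl(\frac{\Lambda}{2}f(\phi)+a\beta\bigr)}\Bigr)^{-1};$$ then for any sequence $\beta_n\downarrow 0$ and any choice of maximizers $\phi_n^*\in\arg\max_{\phi\in[0,\phi_h]}\mathcal M(\phi;\beta_n)$, there is a subsequence of $(\phi_n^* )$ converging to $\phi^*$.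
   Context: Model (monopoly): a single ride-hailing platform receives passengers as a Poisson process of rate $\Lambda/2$. Drivers arrive as a Poisson process of rate $\eta$ and wait in an FCFS queue. When a passenger arrives and at least one driver waits, the passenger is quoted the static price $\phi\in[0,\phi_h]$ and accepts with probability $f(\phi)$ (then immediately starting a ride with the head-of-line driver); otherwise the passenger is lost. Each waiting driver abandons independently after an exponential time of rate $\beta$; rides and post-abandonment breaks last exponential times of rate $\nu$, after which the driver rejoins the waiting queue with probability $p\in[0,1)$ and leaves otherwise. Here $e=\eta/(1-p)$. $\mathcal D(\phi;\beta)$ is the stationary probability that no driver is waiting and $\mathcal M(\phi;\beta)$ is the long-run rate of revenue (sum of accepted prices per unit time). $\tilde{\mathcal M}$ is the limit of $\mathcal M(\cdot;\beta)$ as $\beta\to 0$. *)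

theory Defs
  imports "HOL-Analysis.Analysis"
begin

definition strictly_concave_on :: "real set \<Rightarrow> (real \<Rightarrow> real) \<Rightarrow> bool" where
  "strictly_concave_on S f \<longleftrightarrow> convex S \<and>
     (\<forall>x\<in>S. \<forall>y\<in>S. \<forall>u::real. x \<noteq> y \<longrightarrow> 0 < u \<longrightarrow> u < 1 \<longrightarrow>
        f (u * x + (1 - u) * y) > u * f x + (1 - u) * f y)"

definition Mtilde :: "real \<Rightarrow> real \<Rightarrow> (real \<Rightarrow> real) \<Rightarrow> real \<Rightarrow> real" where
  "Mtilde Lam e f phi =
     (if e / ((Lam / 2) * f phi) < 1 then e * phi else (Lam / 2) * f phi * phi)"

text \<open>Stationary probability that no driver is waiting.\<close>
definition Dnodriver :: "real \<Rightarrow> real \<Rightarrow> (real \<Rightarrow> real) \<Rightarrow> real \<Rightarrow> real \<Rightarrow> real" where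
  "Dnodriver Lam e f phi beta =
     inverse (\<Sum>n. e ^ n / (\<Prod>a\<in>{1..n}. (Lam / 2) * f phi + real a * beta))"

definition Mrev :: "real \<Rightarrow> real \<Rightarrow> (real \<Rightarrow> real) \<Rightarrow> real \<Rightarrow> real \<Rightarrow> real" where
  "Mrev Lam e f phi beta = (Lam / 2) * f phi * phi * (1 - Dnodriver Lam e f phi beta)"

end

theory Submission
  imports Defs
begin

text \<open>As \<open>\<beta> \<rightarrow> 0\<close> the queue of waiting drivers approaches an M/M/1 queue with arrival rate
  \<open>e\<close> and service rate \<open>\<lambda> = (\<Lambda>/2) f(\<phi>)\<close>. The matching rate \<open>\<lambda>(1 - D)\<close> is always at most
  \<open>min e \<lambda>\<close>, with equality in the limit when \<open>\<lambda> \<le> e\<close>; so \<open>\<M>(\<phi>;\<beta>) \<le> \<phi> min e \<lambda> = Mtilde(\<phi>)\<close>,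
  with convergence at every \<open>\<phi> \<ge> phi_low\<close>. There \<open>Mtilde\<close> is the strictly concave
  \<open>(\<Lambda>/2) f(\<phi>) \<phi>\<close>, maximal at \<open>phi_fp\<close>, while below \<open>phi_low\<close> it is the increasing \<open>e \<phi>\<close>.
  Hence \<open>max phi_fp phi_low\<close> is the unique maximiser of the continuous \<open>Mtilde\<close>, and by
  compactness every limit point of maximisers of \<open>\<M>(\<cdot>;\<beta>\<^sub>n)\<close> maximises \<open>Mtilde\<close>.\<close>

lemma strictly_concave_onD:
  assumes "strictly_concave_on S f" "x \<in> S" "y \<in> S" "x \<noteq> y" "0 < u" "u < 1"
  shows "f (u * x + (1 - u) * y) > u * f x + (1 - u) * f y"
  using assms by (simp add: strictly_concave_on_def)

lemma strictly_concave_on_imp_convex: "strictly_concave_on S f \<Longrightarrow> convex S"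
  by (simp add: strictly_concave_on_def)

lemma strictly_concave_on_cmult:
  assumes "c > 0" "strictly_concave_on S f"
  shows "strictly_concave_on S (\<lambda>x. c * f x)"
proof -
  have "c * f (u * x + (1 - u) * y) > u * (c * f x) + (1 - u) * (c * f y)"
    if "x \<in> S" "y \<in> S" "x \<noteq> y" "0 < u" "u < 1" for x y u
  proof -
    have "f (u * x + (1 - u) * y) > u * f x + (1 - u) * f y"
      using strictly_concave_onD[OF assms(2) that] .
    then have "c * f (u * x + (1 - u) * y) > c * (u * f x + (1 - u) * f y)"
      using assms(1) by simp
    then show ?thesis by (simp add: algebra_simps)
  qed
  then show ?thesis using assms(2) by (simp add: strictly_concave_on_def)
qed

text \<open>The revenue \<open>f(x) x\<close> inherits strict concavity: the cross term
  \<open>u(1 - u)(x - y)(f x - f y)\<close> has the right sign because \<open>f\<close> is antitone.\<close>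

lemma strictly_concave_on_mult_arg:
  assumes conc: "strictly_concave_on S f" and anti: "antimono_on S f" and nonneg: "S \<subseteq> {0..}"
  shows "strictly_concave_on S (\<lambda>x. f x * x)"
proof -
  have "f (u * x + (1 - u) * y) * (u * x + (1 - u) * y) > u * (f x * x) + (1 - u) * (f y * y)"
    if xy: "x \<in> S" "y \<in> S" "x \<noteq> y" and u: "0 < u" "u < 1" for x y u
  proof -
    define z where "z = u * x + (1 - u) * y"
    have "x \<ge> 0" "y \<ge> 0" using xy nonneg by auto
    then have "z > 0"
      unfolding z_def using xy u by (cases "x = 0") (auto intro: add_pos_nonneg add_nonneg_pos)
    moreover have "f z > u * f x + (1 - u) * f y"
      unfolding z_def using strictly_concave_onD[OF conc xy u] .
    ultimately have "f z * z > (u * f x + (1 - u) * f y) * z" by simp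
    moreover have "(x - y) * (f x - f y) \<le> 0"
      using xy anti by (cases "x \<le> y") (auto simp: monotone_on_def mult_le_0_iff)
    then have "u * (1 - u) * ((x - y) * (f x - f y)) \<le> 0"
      using u by (simp add: mult_nonneg_nonpos)
    moreover have "(u * f x + (1 - u) * f y) * z - (u * (f x * x) + (1 - u) * (f y * y))
        = - (u * (1 - u) * ((x - y) * (f x - f y)))"
      unfolding z_def by (simp add: algebra_simps)
    ultimately show ?thesis unfolding z_def by linarith
  qed
  then show ?thesis using conc by (simp add: strictly_concave_on_def)
qed

lemma strictly_concave_on_less_max:
  assumes conc: "strictly_concave_on S h" and F: "F \<in> S" "\<forall>x\<in>S. h x \<le> h F"
    and x: "x \<in> S" "x \<noteq> F"
  shows "h x < h F"
proof -
  have "h ((1/2) * x + (1 - 1/2) * F) > (1/2) * h x + (1 - 1/2) * h F"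
    using strictly_concave_onD[OF conc x(1) F(1) x(2), of "1/2"] by simp
  moreover have "(1/2) * x + (1 - 1/2) * F \<in> S"
    using convexD[OF strictly_concave_on_imp_convex[OF conc] x(1) F(1), of "1/2" "1/2"] by simp
  ultimately show ?thesis using F by fastforce
qed

lemma strictly_concave_on_strict_antimono_right_of_max:
  assumes conc: "strictly_concave_on S h" and F: "F \<in> S" "\<forall>x\<in>S. h x \<le> h F"
    and x: "x \<in> S" and y: "F \<le> y" "y < x"
  shows "h x < h y"
proof (cases "y = F")
  case True
  then show ?thesis using strictly_concave_on_less_max[OF conc F x] y by simp
next
  case False
  define u where "u = (x - y) / (x - F)"
  have u: "0 < u" "u < 1" using y False by (auto simp: u_def divide_less_eq)
  have "u * (x - F) = x - y"
    using y by (simp add: u_def)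
  then have y_eq: "y = u * F + (1 - u) * x"
    unfolding left_diff_distrib right_diff_distrib by linarith
  have "h y > u * h F + (1 - u) * h x"
    unfolding y_eq using strictly_concave_onD[OF conc F(1) x] u y by simp
  moreover have "u * h x \<le> u * h F" using F x u by simp
  ultimately show ?thesis by (simp add: algebra_simps)
qed

lemma min_line_concave_unique_argmax:
  fixes g H :: "real \<Rightarrow> real"
  assumes conc: "strictly_concave_on S H" and F: "F \<in> S" "\<forall>x\<in>S. H x \<le> H F"
    and L: "L \<in> S" "H L = e * L" and e: "e > 0"
    and bound: "\<forall>x\<in>S. g x \<le> e * x \<and> g x \<le> H x" and eq: "\<forall>x\<in>S. L \<le> x \<longrightarrow> g x = H x"
    and x: "x \<in> S" "x \<noteq> max F L"
  shows "g x < g (max F L)"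
proof (cases "L \<le> F")
  case True
  then have "g x \<le> H x" "H x < H F" "g F = H F"
    using bound x strictly_concave_on_less_max[OF conc F x(1)] eq F by auto
  then show ?thesis using True by simp
next
  case False
  then have gL: "g (max F L) = e * L" using eq L by simp
  consider "x < L" | "L < x" using x False by fastforce
  then show ?thesis
  proof cases
    case 1
    then show ?thesis using bound x e gL by (smt (verit) mult_strict_left_mono)
  next
    case 2
    then have "H x < H L"
      using False by (intro strictly_concave_on_strict_antimono_right_of_max[OF conc F x(1)]) auto
    then show ?thesis using bound x gL L by fastforce
  qed
qed

lemma subseq_maximizers_tendsto_unique_argmax:
  fixes g :: "'a::metric_space \<Rightarrow> real" and G :: "nat \<Rightarrow> 'a \<Rightarrow> real"
  assumes "compact S" "continuous_on S g" "P \<in> S" and strict: "\<forall>x\<in>S. x \<noteq> P \<longrightarrow> g x < g P"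
    and ps: "\<forall>n. ps n \<in> S" and max: "\<forall>n. G n P \<le> G n (ps n)" and below: "\<forall>n. G n (ps n) \<le> g (ps n)"
    and lim: "(\<lambda>n. G n P) \<longlonglongrightarrow> g P"
  shows "\<exists>r. strict_mono r \<and> (ps \<circ> r) \<longlonglongrightarrow> P"
proof -
  obtain q r where q: "q \<in> S" and r: "strict_mono r" and lim_q: "(ps \<circ> r) \<longlonglongrightarrow> q"
    using assms(1) ps unfolding compact_eq_seq_compact_metric seq_compact_def by metis
  have "(\<lambda>k. G (r k) P) \<longlonglongrightarrow> g P"
    using LIMSEQ_subseq_LIMSEQ[OF lim r] by (simp add: comp_def)
  moreover have "(\<lambda>k. g (ps (r k))) \<longlonglongrightarrow> g q"
    using continuous_on_tendsto_compose[OF assms(2) lim_q q] ps by (simp add: comp_def)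
  moreover have "\<forall>k. G (r k) P \<le> g (ps (r k))"
    using max below order_trans by blast
  ultimately have "g P \<le> g q" by (blast intro: LIMSEQ_le)
  then have "q = P" using strict q by fastforce
  then show ?thesis using r lim_q by blast
qed

text \<open>The terms are the ratios \<open>\<pi>\<^sub>n / \<pi>\<^sub>0\<close> of the stationary distribution of the number of
  waiting drivers, a birth-death chain with birth rate \<open>e\<close> and death rate \<open>\<lambda> + n b\<close>.\<close>

definition driver_queue_normalizer :: "real \<Rightarrow> real \<Rightarrow> real \<Rightarrow> real" where
  "driver_queue_normalizer e lam b = (\<Sum>n. e ^ n / (\<Prod>a\<in>{1..n}. lam + real a * b))"

lemma Dnodriver_eq_normalizer:
  "Dnodriver Lam e f phi beta = inverse (driver_queue_normalizer e (Lam / 2 * f phi) beta)"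
  by (simp add: Dnodriver_def driver_queue_normalizer_def)

lemma queue_denominator_pos:
  fixes lam b :: real
  assumes "lam > 0" "b \<ge> 0"
  shows "0 < (\<Prod>a\<in>{1..n}. lam + real a * b)"
  using assms by (intro prod_pos) (auto intro: add_pos_nonneg)

lemma queue_denominator_ge_fact:
  fixes lam b :: real
  assumes "lam > 0" "b \<ge> 0"
  shows "fact n * b ^ n \<le> (\<Prod>a\<in>{1..n}. lam + real a * b)"
proof -
  have "fact n * b ^ n = (\<Prod>a\<in>{1..n}. real a * b)"
    by (simp add: prod.distrib fact_prod)
  also have "\<dots> \<le> (\<Prod>a\<in>{1..n}. lam + real a * b)"
    using assms by (intro prod_mono) auto
  finally show ?thesis .
qed

lemma queue_denominator_ge_power:
  fixes lam b :: real
  assumes "lam > 0" "b \<ge> 0"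
  shows "lam ^ n \<le> (\<Prod>a\<in>{1..n}. lam + real a * b)"
proof -
  have "(\<Prod>a\<in>{1..n}. lam) \<le> (\<Prod>a\<in>{1..n}. lam + real a * b)"
    using assms by (intro prod_mono) auto
  then show ?thesis by simp
qed

lemma summable_driver_queue_terms:
  fixes lam b e :: real
  assumes "lam > 0" "b > 0" "e \<ge> 0"
  shows "summable (\<lambda>n. e ^ n / (\<Prod>a\<in>{1..n}. lam + real a * b))"
proof (rule summable_comparison_test'[OF summable_exp[of "e / b"]])
  fix n :: nat
  have pos: "0 < (\<Prod>a\<in>{1..n}. lam + real a * b)"
    using assms by (intro queue_denominator_pos) auto
  have "e ^ n / (\<Prod>a\<in>{1..n}. lam + real a * b) \<le> e ^ n / (fact n * b ^ n)"
    using assms pos queue_denominator_ge_fact[of lam b n]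
    by (intro divide_left_mono) (auto intro!: mult_pos_pos)
  also have "\<dots> = inverse (fact n) * (e / b) ^ n"
    by (simp add: field_simps power_divide)
  finally show "norm (e ^ n / (\<Prod>a\<in>{1..n}. lam + real a * b)) \<le> inverse (fact n) * (e / b) ^ n"
    using pos assms by simp
qed

lemma partial_sum_le_driver_queue_normalizer:
  fixes lam b e :: real
  assumes "lam > 0" "b > 0" "e \<ge> 0"
  shows "(\<Sum>n<N. e ^ n / (\<Prod>a\<in>{1..n}. lam + real a * b)) \<le> driver_queue_normalizer e lam b"
  unfolding driver_queue_normalizer_def
  using assms queue_denominator_pos[of lam b]
  by (intro sum_le_suminf summable_driver_queue_terms) (auto intro!: divide_nonneg_pos)

lemma one_le_driver_queue_normalizer:
  fixes lam b e :: real
  assumes "lam > 0" "b > 0" "e \<ge> 0"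
  shows "1 \<le> driver_queue_normalizer e lam b"
  using partial_sum_le_driver_queue_normalizer[OF assms, of 1] by simp

lemma driver_queue_normalizer_le_geometric:
  fixes lam b e :: real
  assumes "e < lam" "b > 0" "e \<ge> 0"
  shows "driver_queue_normalizer e lam b \<le> 1 / (1 - e / lam)"
proof -
  have lam: "lam > 0" using assms by simp
  have geom: "(\<lambda>n. (e / lam) ^ n) sums (1 / (1 - e / lam))"
    using geometric_sums[of "e / lam"] assms by simp
  have "driver_queue_normalizer e lam b \<le> (\<Sum>n. (e / lam) ^ n)"
    unfolding driver_queue_normalizer_def
  proof (rule suminf_le)
    fix n
    have "e ^ n / (\<Prod>a\<in>{1..n}. lam + real a * b) \<le> e ^ n / lam ^ n"
      using assms lam queue_denominator_ge_power[of lam b n] queue_denominator_pos[of lam b n]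
      by (intro divide_left_mono) (auto intro!: mult_pos_pos)
    then show "e ^ n / (\<Prod>a\<in>{1..n}. lam + real a * b) \<le> (e / lam) ^ n"
      by (simp add: power_divide)
  qed (use summable_driver_queue_terms[OF lam assms(2,3)] geom sums_summable in blast)+
  then show ?thesis using geom sums_unique by metis
qed

lemma matching_rate_le_min:
  fixes lam b e :: real
  assumes "lam > 0" "b > 0" "e \<ge> 0"
  shows "lam * (1 - inverse (driver_queue_normalizer e lam b)) \<le> min e lam"
proof -
  define S where "S = driver_queue_normalizer e lam b"
  have S: "1 \<le> S" unfolding S_def using assms by (rule one_le_driver_queue_normalizer)
  have "lam * (1 - inverse S) \<le> e" if "e < lam"
  proof -
    have "S \<le> 1 / (1 - e / lam)"
      unfolding S_def using that assms by (intro driver_queue_normalizer_le_geometric)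
    then have "1 - e / lam \<le> inverse S"
      using S that assms by (simp add: field_simps)
    then show ?thesis using assms by (simp add: field_simps)
  qed
  moreover have "lam * (1 - inverse S) \<le> lam" using S assms by simp
  ultimately show ?thesis unfolding S_def[symmetric] by (cases "e < lam") auto
qed

lemma inverse_driver_queue_normalizer_tendsto_0:
  fixes lam e :: real and b :: "nat \<Rightarrow> real"
  assumes "lam > 0" "lam \<le> e" "\<And>k. b k > 0" "b \<longlonglongrightarrow> 0"
  shows "(\<lambda>k. inverse (driver_queue_normalizer e lam (b k))) \<longlonglongrightarrow> 0"
proof (rule tendsto_inverse_0_at_top, subst filterlim_at_top, intro allI)
  fix Z :: real
  define N where "N = nat (ceiling Z) + 2"
  define Q where "Q = (\<lambda>x. \<Sum>n<N. e ^ n / (\<Prod>a\<in>{1..n}. lam + real a * x))"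
  have "(\<lambda>k. Q (b k)) \<longlonglongrightarrow> Q 0"
    unfolding Q_def using assms(1)
    by (intro tendsto_intros assms(4)) (auto simp: queue_denominator_pos)
  \<comment> \<open>at \<open>b = 0\<close> the terms are \<open>(e/\<lambda>)\<^sup>n \<ge> 1\<close>\<close>
  moreover have "real N \<le> Q 0"
  proof -
    have "(\<Sum>n<N. (1::real)) \<le> Q 0" unfolding Q_def
    proof (intro sum_mono)
      fix n
      have "1 \<le> (e / lam) ^ n" using assms by (intro one_le_power) simp
      then show "1 \<le> e ^ n / (\<Prod>a\<in>{1..n}. lam + real a * 0)" by (simp add: power_divide)
    qed
    then show ?thesis by simp
  qed
  ultimately have "\<forall>\<^sub>F k in sequentially. Z < Q (b k)"
    by (elim order_tendstoD(1)) (simp add: N_def, linarith)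
  then show "\<forall>\<^sub>F k in sequentially. Z \<le> driver_queue_normalizer e lam (b k)"
  proof (rule eventually_mono)
    fix k assume "Z < Q (b k)"
    moreover have "Q (b k) \<le> driver_queue_normalizer e lam (b k)"
      unfolding Q_def using assms(1,2) assms(3)[of k]
      by (intro partial_sum_le_driver_queue_normalizer) auto
    ultimately show "Z \<le> driver_queue_normalizer e lam (b k)" by simp
  qed
qed

lemma Mtilde_eq_min:
  assumes "Lam > 0" "f phi > 0"
  shows "Mtilde Lam e f phi = phi * min e (Lam / 2 * f phi)"
proof -
  have "e / (Lam / 2 * f phi) < 1 \<longleftrightarrow> e < Lam / 2 * f phi"
    using assms by (simp add: pos_divide_less_eq)
  then show ?thesis by (simp add: Mtilde_def min_def mult.commute)
qed

lemma Mrev_le_Mtilde: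
  assumes "Lam > 0" "e \<ge> 0" "phi \<ge> 0" "f phi > 0" "beta > 0"
  shows "Mrev Lam e f phi beta \<le> Mtilde Lam e f phi"
proof -
  define lam where "lam = Lam / 2 * f phi"
  have "Mrev Lam e f phi beta = phi * (lam * (1 - inverse (driver_queue_normalizer e lam beta)))"
    unfolding Mrev_def Dnodriver_eq_normalizer lam_def by (simp only: mult_ac)
  also have "\<dots> \<le> phi * min e lam"
    using assms by (intro mult_left_mono matching_rate_le_min) (auto simp: lam_def)
  also have "\<dots> = Mtilde Lam e f phi"
    using assms by (simp add: Mtilde_eq_min lam_def)
  finally show ?thesis .
qed

lemma Mrev_tendsto_Mtilde:
  fixes beta :: "nat \<Rightarrow> real"
  assumes "Lam > 0" "f phi > 0" "Lam / 2 * f phi \<le> e" "\<And>k. beta k > 0" "beta \<longlonglongrightarrow> 0"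
  shows "(\<lambda>k. Mrev Lam e f phi (beta k)) \<longlonglongrightarrow> Mtilde Lam e f phi"
proof -
  have "(\<lambda>k. Dnodriver Lam e f phi (beta k)) \<longlonglongrightarrow> 0"
    unfolding Dnodriver_eq_normalizer
    using assms by (intro inverse_driver_queue_normalizer_tendsto_0) auto
  then have "(\<lambda>k. Mrev Lam e f phi (beta k)) \<longlonglongrightarrow> Lam / 2 * f phi * phi * (1 - 0)"
    unfolding Mrev_def by (intro tendsto_intros)
  moreover have "Lam / 2 * f phi * phi * (1 - 0) = Mtilde Lam e f phi"
    using assms(1-3) by (simp add: Mtilde_eq_min min_absorb2)
  ultimately show ?thesis by simp
qed

lemma Mtilde_continuous_on:
  assumes "Lam > 0" "continuous_on S f" "\<forall>x\<in>S. f x > 0"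
  shows "continuous_on S (Mtilde Lam e f)"
proof (rule continuous_on_eq)
  show "continuous_on S (\<lambda>x. x * min e (Lam / 2 * f x))"
    by (intro continuous_on_mult continuous_on_id continuous_on_min continuous_on_const assms(2))
  show "x * min e (Lam / 2 * f x) = Mtilde Lam e f x" if "x \<in> S" for x
    using assms that by (simp add: Mtilde_eq_min)
qed

lemma demand_le_supply_right_of_crossing:
  fixes f :: "'a::order \<Rightarrow> real"
  assumes anti: "antimono_on S f" and Lam: "Lam > 0" and L: "L \<in> S" "Lam / 2 * f L = e"
    and x: "x \<in> S" "L \<le> x"
  shows "Lam / 2 * f x \<le> e"
proof -
  have "Lam / 2 * f x \<le> Lam / 2 * f L"
    using monotone_onD[OF anti L(1) x] Lam by (intro mult_left_mono) auto
  then show ?thesis using L(2) by linarith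
qed

lemma Mtilde_less_at_max:
  assumes Lam: "Lam > 0" and e: "e > 0" and S: "S \<subseteq> {0..}" and fpos: "\<forall>x\<in>S. f x > 0"
    and conc: "strictly_concave_on S f" and anti: "antimono_on S f"
    and L: "L \<in> S" "Lam / 2 * f L = e" and F: "F \<in> S" "\<forall>x\<in>S. f x * x \<le> f F * F"
    and x: "x \<in> S" "x \<noteq> max F L"
  shows "Mtilde Lam e f x < Mtilde Lam e f (max F L)"
proof (rule min_line_concave_unique_argmax[where H = "\<lambda>x. Lam / 2 * (f x * x)"])
  show "strictly_concave_on S (\<lambda>x. Lam / 2 * (f x * x))"
    using Lam by (intro strictly_concave_on_cmult strictly_concave_on_mult_arg conc anti S) auto
  show "\<forall>x\<in>S. Lam / 2 * (f x * x) \<le> Lam / 2 * (f F * F)"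
    using F Lam by simp
  show "\<forall>x\<in>S. Mtilde Lam e f x \<le> e * x \<and> Mtilde Lam e f x \<le> Lam / 2 * (f x * x)"
  proof
    fix x assume "x \<in> S"
    then have "x \<ge> 0" "Mtilde Lam e f x = x * min e (Lam / 2 * f x)"
      using S fpos Lam by (auto simp: Mtilde_eq_min)
    then show "Mtilde Lam e f x \<le> e * x \<and> Mtilde Lam e f x \<le> Lam / 2 * (f x * x)"
      using mult_left_mono[OF min.cobounded1] mult_left_mono[OF min.cobounded2]
      by (metis mult.commute mult.left_commute)
  qed
  show "\<forall>x\<in>S. L \<le> x \<longrightarrow> Mtilde Lam e f x = Lam / 2 * (f x * x)"
    using demand_le_supply_right_of_crossing[OF anti Lam L] fpos Lam
    by (auto simp: Mtilde_eq_min min_absorb2)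
qed (use L F e x in auto)

theorem theorem1:
  fixes Lam e phi_h :: real and f :: "real \<Rightarrow> real" and phi_fp phi_low :: real
  assumes Lam_pos: "Lam > 0" and e_pos: "e > 0" and phi_h_pos: "phi_h > 0"
    and f_range: "\<forall>x\<in>{0..phi_h}. 0 < f x \<and> f x \<le> 1"
    and f_conc: "strictly_concave_on {0..phi_h} f"
    and f_decr: "strict_antimono_on {0..phi_h} f"
    and f_diff: "f differentiable_on {0..phi_h}"
    and f0: "f 0 = 1"
    and in_range: "2 * e / Lam \<in> f ` {0..phi_h}"
    and phi_low: "phi_low \<in> {0..phi_h}" "f phi_low = 2 * e / Lam"
    and phi_fp: "phi_fp \<in> {0..phi_h}" "\<forall>phi\<in>{0..phi_h}. f phi * phi \<le> f phi_fp * phi_fp"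
  shows "(\<exists>!psi. psi \<in> {0..phi_h} \<and> (\<forall>phi\<in>{0..phi_h}. Mtilde Lam e f phi \<le> Mtilde Lam e f psi))
       \<and> max phi_fp phi_low \<in> {0..phi_h}
       \<and> (\<forall>phi\<in>{0..phi_h}. Mtilde Lam e f phi \<le> Mtilde Lam e f (max phi_fp phi_low))
       \<and> (\<forall>(beta :: nat \<Rightarrow> real) (ps :: nat \<Rightarrow> real).
            (\<forall>n. beta n > 0) \<and> decseq beta \<and> beta \<longlonglongrightarrow> 0 \<and>
            (\<forall>n. ps n \<in> {0..phi_h} \<and>
                 (\<forall>phi\<in>{0..phi_h}. Mrev Lam e f phi (beta n) \<le> Mrev Lam e f (ps n) (beta n)))
            \<longrightarrow> (\<exists>r. strict_mono r \<and> (ps \<circ> r) \<longlonglongrightarrow> max phi_fp phi_low))"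
proof -
  define P where "P = max phi_fp phi_low"
  have fpos: "\<forall>x\<in>{0..phi_h}. f x > 0" using f_range by blast
  have anti: "antimono_on {0..phi_h} f" using f_decr strict_antimono_iff_antimono by blast
  have fL: "Lam / 2 * f phi_low = e" using phi_low(2) Lam_pos by simp
  have P: "P \<in> {0..phi_h}" using phi_low phi_fp by (auto simp: P_def)
  have strict: "\<forall>x\<in>{0..phi_h}. x \<noteq> P \<longrightarrow> Mtilde Lam e f x < Mtilde Lam e f P"
    unfolding P_def using phi_low(1) fL phi_fp Lam_pos e_pos fpos f_conc anti
    by (intro ballI impI Mtilde_less_at_max) auto
  have cont: "continuous_on {0..phi_h} (Mtilde Lam e f)"
    using Lam_pos fpos f_diff by (intro Mtilde_continuous_on differentiable_imp_continuous_on)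
  have demand_le_supply: "Lam / 2 * f P \<le> e"
    using demand_le_supply_right_of_crossing[OF anti Lam_pos phi_low(1) fL P] by (simp add: P_def)
  have max: "\<forall>x\<in>{0..phi_h}. Mtilde Lam e f x \<le> Mtilde Lam e f P"
    using strict by (metis less_imp_le order_refl)
  have unique: "psi = P" if "psi \<in> {0..phi_h}" "Mtilde Lam e f P \<le> Mtilde Lam e f psi" for psi
    using strict that by force
  have subseq: "\<exists>r. strict_mono r \<and> (ps \<circ> r) \<longlonglongrightarrow> P"
    if beta: "\<forall>n. beta n > 0" "beta \<longlonglongrightarrow> 0"
      and ps: "\<forall>n. ps n \<in> {0..phi_h} \<and> (\<forall>x\<in>{0..phi_h}. Mrev Lam e f x (beta n) \<le> Mrev Lam e f (ps n) (beta n))"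
    for beta ps
    using compact_Icc cont P strict
  proof (rule subseq_maximizers_tendsto_unique_argmax[where G = "\<lambda>n x. Mrev Lam e f x (beta n)"])
    show "\<forall>n. Mrev Lam e f (ps n) (beta n) \<le> Mtilde Lam e f (ps n)"
      using ps fpos beta Lam_pos e_pos by (auto intro: Mrev_le_Mtilde)
    show "(\<lambda>n. Mrev Lam e f P (beta n)) \<longlonglongrightarrow> Mtilde Lam e f P"
      using Lam_pos fpos P demand_le_supply beta by (intro Mrev_tendsto_Mtilde) auto
  qed (use ps P in auto)
  show ?thesis
    unfolding P_def[symmetric] using P max unique subseq by blast
qed

end
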